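(* Let $R$ be a commutative domain with field of fractions $F$, and let $A\in R^{n\times n}$ have rank $r\ge1$ with $\alpha^i\ne0$ for $i=1,\dots,r$. Let $L$ be the $n\times n$ matrix whose first $r$ columns are $(\alpha^j_{i,j})_{i=1..n,\,j=1..r}$ and whose last $n-r$ columns are the standard basis vectors $e_{r+1},\dots,e_n$; let $U$ be the $n\times n$ matrix whose first $r$ rows are $(\alpha^i_{i,j})_{i=1..r,\,j=1..n}$ and whose last $n-r$ rows are $e_{r+1}^T,\dots,e_n^T$; and let $D=\mathrm{diag}\big((\alpha^0\alpha^1)^{-1},\dots,(\alpha^{r-1}\alpha^r)^{-1},0,\dots,0\big)\in F^{n\times n}$. Let $S$ be the $n\times n$ "flipped identity" matrix (ones on the antidiagonal, zeros elsewhere). Then $A=LDU$, $L$ is an invertible lower triangular matrix, $U$ is an invertible upper triangular matrix, $V=SLS$ is an invertible upper triangular matrix, and $$SA=V\,(SD)\,U,$$ where $SD$ has at most one nonzero entry in each row and each column; i.e. this is a Bruhat decomposition of $SA$.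
   Context: For $A=(a_{i,j})\in R^{n\times n}$ and integers $k\ge1$, $1\le i,j\le n$, $\alpha^k_{i,j}$ denotes the $k\times k$ minor of $A$ formed by rows $1,\dots,k-1,i$ and columns $1,\dots,k-1,j$ (it is $0$ if $i<k$ or $j<k$). Set $\alpha^0=1$ and $\alpha^k=\alpha^k_{k,k}$. A Bruhat decomposition of a matrix $M$ is a factorization $M=VwU$ with $V,U$ nonsingular upper triangular and $w$ a (possibly weighted) permutation-type matrix, i.e. having at most one nonzero entry in each row and column. *)

theory Defs
  imports "Jordan_Normal_Form.Matrix" "Jordan_Normal_Form.Determinant" "Jordan_Normal_Form.DL_Rank"
    "HOL-Computational_Algebra.Fraction_Field"
begin

definition to_fract :: "'a::idom \<Rightarrow> 'a fract" where
  "to_fract a = Fract a 1"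

text \<open>Minor alpha^k_{i,j} with 1-based indices k, i, j (as in the paper):
  the k x k minor on rows 1..k-1,i and columns 1..k-1,j; zero if i<k or j<k.
  Matrices are 0-indexed in Jordan_Normal_Form, hence the shifts.\<close>
definition alpha :: "'a::comm_ring_1 mat \<Rightarrow> nat \<Rightarrow> nat \<Rightarrow> nat \<Rightarrow> 'a" where
  "alpha A k i j =
    (if k = 0 then 1
     else if i < k \<or> j < k then 0
     else det (mat k k (\<lambda>(p, q). A $$ (if p < k - 1 then p else i - 1,
                                       if q < k - 1 then q else j - 1))))"

definition alpha_lead :: "'a::comm_ring_1 mat \<Rightarrow> nat \<Rightarrow> 'a" where
  "alpha_lead A k = (if k = 0 then 1 else alpha A k k k)"

definition lower_triangular :: "'a::zero mat \<Rightarrow> bool" where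
  "lower_triangular M \<longleftrightarrow> (\<forall>i < dim_row M. \<forall>j < dim_col M. i < j \<longrightarrow> M $$ (i, j) = 0)"

definition perm_type :: "'a::zero mat \<Rightarrow> bool" where
  "perm_type M \<longleftrightarrow>
     (\<forall>i < dim_row M. \<forall>j1 < dim_col M. \<forall>j2 < dim_col M.
         M $$ (i, j1) \<noteq> 0 \<longrightarrow> M $$ (i, j2) \<noteq> 0 \<longrightarrow> j1 = j2) \<and>
     (\<forall>j < dim_col M. \<forall>i1 < dim_row M. \<forall>i2 < dim_row M.
         M $$ (i1, j) \<noteq> 0 \<longrightarrow> M $$ (i2, j) \<noteq> 0 \<longrightarrow> i1 = i2)"

definition L_mat :: "nat \<Rightarrow> nat \<Rightarrow> 'a::comm_ring_1 mat \<Rightarrow> 'a mat" where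
  "L_mat n r A = mat n n (\<lambda>(i, j). if j < r then alpha A (j+1) (i+1) (j+1)
                                   else if i = j then 1 else 0)"

definition U_mat :: "nat \<Rightarrow> nat \<Rightarrow> 'a::comm_ring_1 mat \<Rightarrow> 'a mat" where
  "U_mat n r A = mat n n (\<lambda>(i, j). if i < r then alpha A (i+1) (i+1) (j+1)
                                   else if i = j then 1 else 0)"

definition D_mat :: "nat \<Rightarrow> nat \<Rightarrow> 'a::idom mat \<Rightarrow> 'a fract mat" where
  "D_mat n r A = mat n n (\<lambda>(i, j). if i = j \<and> i < r
       then inverse (to_fract (alpha_lead A i * alpha_lead A (i+1))) else 0)"

definition flip_mat :: "nat \<Rightarrow> 'a::zero_neq_one mat" where
  "flip_mat n = mat n n (\<lambda>(i, j). if i + j = n - 1 then 1 else 0)"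

end

theory Submission
  imports Defs "Jordan_Normal_Form.DL_Rank_Submatrix"
begin

text \<open>The key fact is the Sylvester (Desnanot--Jacobi) identity
  \<alpha>^k \<alpha>^{k+2}_{i,j} = \<alpha>^{k+1} \<alpha>^{k+1}_{i,j} - \<alpha>^{k+1}_{i,k+1} \<alpha>^{k+1}_{k+1,j},
  obtained by writing both bordered minors through the Schur complement of the leading
  k \<times> k block. Divided by \<alpha>^k \<alpha>^{k+1} it makes
  a_{i,j} - \<Sum>_{k\<le>m} \<alpha>^k_{i,k} \<alpha>^k_{k,j} / (\<alpha>^{k-1} \<alpha>^k) telescope to \<alpha>^{m+1}_{i,j} / \<alpha>^m.
  For m = r the minor \<alpha>^{r+1}_{i,j} vanishes by the rank condition, which is A = LDU entrywise.
  L and U are triangular since \<alpha>^k_{i,j} = 0 for i < k or j < k, and their diagonals carry the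
  nonzero leading minors. Conjugation by the involution S reverses rows and columns, so SLS is
  upper triangular, and SA = (SLS)(SD)U because S^2 = 1.\<close>

lemma det_four_block_mat_schur_complement:
  fixes B :: "'b::field mat"
  assumes B: "B \<in> carrier_mat m m" and C: "C \<in> carrier_mat m p" and R: "R \<in> carrier_mat p m"
    and E: "E \<in> carrier_mat p p" and Bi: "Bi \<in> carrier_mat m m" and B_Bi: "B * Bi = 1\<^sub>m m"
  shows "det (four_block_mat B C R E) = det B * det (E - R * (Bi * C))"
proof -
  define S where "S = E - R * (Bi * C)"
  have BiC: "Bi * C \<in> carrier_mat m p" using Bi C by simp
  have S: "S \<in> carrier_mat p p" unfolding S_def using mult_carrier_mat[OF R BiC] by (rule minus_carrier_mat)
  have B_BiC: "B * (Bi * C) = C"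
    using assoc_mult_mat[OF B Bi C] B_Bi C by simp
  have "four_block_mat B (0\<^sub>m m p) R (1\<^sub>m p) * four_block_mat (1\<^sub>m m) (Bi * C) (0\<^sub>m p m) S
      = four_block_mat (B * 1\<^sub>m m + 0\<^sub>m m p * 0\<^sub>m p m) (B * (Bi * C) + 0\<^sub>m m p * S)
          (R * 1\<^sub>m m + 1\<^sub>m p * 0\<^sub>m p m) (R * (Bi * C) + 1\<^sub>m p * S)"
    using B R BiC S by (intro mult_four_block_mat) auto
  also have "\<dots> = four_block_mat B C R E"
    unfolding B_BiC S_def using B R C E BiC by (intro arg_cong4[where f = four_block_mat] eq_matI) auto
  finally have factor: "four_block_mat B C R E
      = four_block_mat B (0\<^sub>m m p) R (1\<^sub>m p) * four_block_mat (1\<^sub>m m) (Bi * C) (0\<^sub>m p m) S" ..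
  have "det (four_block_mat B C R E)
      = det (four_block_mat B (0\<^sub>m m p) R (1\<^sub>m p)) * det (four_block_mat (1\<^sub>m m) (Bi * C) (0\<^sub>m p m) S)"
    unfolding factor using B R BiC S by (intro det_mult) auto
  also have "\<dots> = det B * det S"
    using det_four_block_mat_upper_right_zero[OF B refl R one_carrier_mat]
      det_four_block_mat_lower_left_zero[OF one_carrier_mat BiC refl S] by simp
  finally show ?thesis unfolding S_def .
qed

definition schur_complement_entry :: "'b::field mat \<Rightarrow> nat \<Rightarrow> 'b mat \<Rightarrow> nat \<Rightarrow> nat \<Rightarrow> 'b" where
  "schur_complement_entry M m Bi u v =
     M $$ (u, v) - vec m (\<lambda>c. M $$ (u, c)) \<bullet> (Bi *\<^sub>v vec m (\<lambda>c. M $$ (c, v)))"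

lemma det_bordered_leading_block:
  fixes M :: "'b::field mat"
  assumes Bi: "Bi \<in> carrier_mat m m" and B_Bi: "mat m m (\<lambda>(a, b). M $$ (a, b)) * Bi = 1\<^sub>m m"
  shows "det (mat (m + p) (m + p) (\<lambda>(a, b).
           M $$ (if a < m then a else x (a - m), if b < m then b else y (b - m))))
    = det (mat m m (\<lambda>(a, b). M $$ (a, b)))
      * det (mat p p (\<lambda>(a, b). schur_complement_entry M m Bi (x a) (y b)))"
proof -
  define B where "B = mat m m (\<lambda>(a, b). M $$ (a, b))"
  define C where "C = mat m p (\<lambda>(a, b). M $$ (a, y b))"
  define R where "R = mat p m (\<lambda>(a, b). M $$ (x a, b))"
  define E where "E = mat p p (\<lambda>(a, b). M $$ (x a, y b))"
  have carriers: "B \<in> carrier_mat m m" "C \<in> carrier_mat m p" "R \<in> carrier_mat p m"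
    "E \<in> carrier_mat p p" unfolding B_def C_def R_def E_def by auto
  have blocks: "mat (m + p) (m + p) (\<lambda>(a, b).
        M $$ (if a < m then a else x (a - m), if b < m then b else y (b - m)))
      = four_block_mat B C R E"
    by (rule eq_matI) (auto simp: B_def C_def R_def E_def)
  have "(R * (Bi * C)) $$ (a, b) = vec m (\<lambda>c. M $$ (x a, c)) \<bullet> (Bi *\<^sub>v vec m (\<lambda>c. M $$ (c, y b)))"
    if "a < p" "b < p" for a b
  proof -
    have "row R a = vec m (\<lambda>c. M $$ (x a, c))" "col C b = vec m (\<lambda>c. M $$ (c, y b))"
      using that unfolding R_def C_def by auto
    moreover have "col (Bi * C) b = Bi *\<^sub>v col C b" using col_mult2[OF Bi carriers(2) \<open>b < p\<close>] .
    ultimately show ?thesis using that carriers Bi by simp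
  qed
  then have "E - R * (Bi * C) = mat p p (\<lambda>(a, b). schur_complement_entry M m Bi (x a) (y b))"
    using carriers Bi by (intro eq_matI) (auto simp: schur_complement_entry_def E_def)
  then show ?thesis
    unfolding blocks B_def[symmetric]
    using det_four_block_mat_schur_complement[OF carriers Bi] B_Bi by (simp add: B_def)
qed

lemma det_dim_2:
  fixes M :: "'b::comm_ring_1 mat"
  assumes "M \<in> carrier_mat 2 2"
  shows "det M = M $$ (0, 0) * M $$ (1, 1) - M $$ (0, 1) * M $$ (1, 0)"
proof -
  have "det M = (\<Sum>i<2. M $$ (i, 0) * cofactor M i 0)"
    using assms by (intro laplace_expansion_column) auto
  also have "\<dots> = M $$ (0, 0) * cofactor M 0 0 + M $$ (1, 0) * cofactor M 1 0"
    by (simp add: numeral_2_eq_2)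
  also have "cofactor M 0 0 = M $$ (1, 1)"
    unfolding cofactor_def using assms by (subst det_single) (auto simp: mat_delete_def)
  also have "cofactor M 1 0 = - M $$ (0, 1)"
    unfolding cofactor_def using assms by (subst det_single) (auto simp: mat_delete_def)
  finally show ?thesis by (simp add: algebra_simps)
qed

lemma alpha_lead_eq_det_leading_block: "alpha_lead M m = det (mat m m (\<lambda>(a, b). M $$ (a, b)))"
proof (cases m)
  case (Suc k)
  then have "mat m m (\<lambda>(p, q). M $$ (if p < m - 1 then p else m - 1, if q < m - 1 then q else m - 1))
      = mat m m (\<lambda>(a, b). M $$ (a, b))"
    by (intro eq_matI) (auto simp: less_Suc_eq)
  with Suc show ?thesis unfolding alpha_lead_def alpha_def by simp
qed (simp add: alpha_lead_def)

lemma alpha_1: "1 \<le> i \<Longrightarrow> 1 \<le> j \<Longrightarrow> alpha M 1 i j = M $$ (i - 1, j - 1)"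
  by (simp add: alpha_def det_single)

lemma alpha_eq_0: "i < k \<or> j < k \<Longrightarrow> 0 < k \<Longrightarrow> alpha M k i j = 0"
  by (simp add: alpha_def)

text \<open>All minors involved border the leading m \<times> m block B, so both sides become (det B)^2
  times a 2 \<times> 2 determinant of Schur complement entries.\<close>

lemma alpha_sylvester_identity:
  fixes M :: "'b::field mat"
  assumes lead: "alpha_lead M m \<noteq> 0"
  shows "alpha_lead M m * alpha M (m + 2) i j
     = alpha_lead M (m + 1) * alpha M (m + 1) i j - alpha M (m + 1) i (m + 1) * alpha M (m + 1) (m + 1) j"
proof (cases "i < m + 2 \<or> j < m + 2")
  case True
  then consider "i < m + 1" | "j < m + 1" | "i = m + 1" | "j = m + 1" by linarith
  then show ?thesis using True by cases (simp_all add: alpha_eq_0 alpha_lead_def)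
next
  case False
  let ?B = "mat m m (\<lambda>(a, b). M $$ (a, b))"
  have "det ?B \<noteq> 0" using lead by (simp add: alpha_lead_eq_det_leading_block)
  then have "?B \<in> Units (ring_mat TYPE('b) m ())" by (intro det_non_zero_imp_unit) auto
  then obtain Bi where Bi: "Bi \<in> carrier_mat m m" and B_Bi: "?B * Bi = 1\<^sub>m m"
    unfolding Units_def ring_mat_def by auto
  let ?s = "schur_complement_entry M m Bi"
  have border_1: "alpha M (m + 1) u v = det ?B * ?s (u - 1) (v - 1)" if "m + 1 \<le> u" "m + 1 \<le> v" for u v
    using det_bordered_leading_block[OF Bi B_Bi, of 1 "\<lambda>_. u - 1" "\<lambda>_. v - 1"] that
    by (simp add: alpha_def det_single)
  define x where "x = (\<lambda>a::nat. if a = 0 then m else i - 1)"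
  define y where "y = (\<lambda>a::nat. if a = 0 then m else j - 1)"
  have "(\<lambda>(p, q). M $$ (if p < m + 2 - 1 then p else i - 1, if q < m + 2 - 1 then q else j - 1))
      = (\<lambda>(a, b). M $$ (if a < m then a else x (a - m), if b < m then b else y (b - m)))"
    by (auto simp: x_def y_def fun_eq_iff)
  then have "alpha M (m + 2) i j = det ?B * det (mat 2 2 (\<lambda>(a, b). ?s (x a) (y b)))"
    using False det_bordered_leading_block[OF Bi B_Bi, of 2 x y] by (simp add: alpha_def)
  also have "det (mat 2 2 (\<lambda>(a, b). ?s (x a) (y b))) = ?s m m * ?s (i - 1) (j - 1) - ?s m (j - 1) * ?s (i - 1) m"
    by (subst det_dim_2) (auto simp: x_def y_def)
  finally have minor_2: "alpha M (m + 2) i j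
      = det ?B * (?s m m * ?s (i - 1) (j - 1) - ?s m (j - 1) * ?s (i - 1) m)" .
  have lead_m: "alpha_lead M m = det ?B" by (rule alpha_lead_eq_det_leading_block)
  have lead_Suc_m: "alpha_lead M (m + 1) = det ?B * ?s m m"
    using border_1[of "m + 1" "m + 1"] by (simp add: alpha_lead_def)
  have "alpha M (m + 1) i j = det ?B * ?s (i - 1) (j - 1)"
    and "alpha M (m + 1) i (m + 1) = det ?B * ?s (i - 1) m"
    and "alpha M (m + 1) (m + 1) j = det ?B * ?s m (j - 1)"
    using False border_1 by auto
  then show ?thesis unfolding minor_2 lead_m lead_Suc_m by (simp add: algebra_simps)
qed

lemma alpha_telescope:
  fixes M :: "'b::field mat"
  assumes nz: "\<forall>k\<in>{1..r}. alpha_lead M k \<noteq> 0" and "1 \<le> i" "1 \<le> j" and "m \<le> r"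
  shows "M $$ (i - 1, j - 1)
      - (\<Sum>l<m. alpha M (l + 1) i (l + 1) * alpha M (l + 1) (l + 1) j / (alpha_lead M l * alpha_lead M (l + 1)))
     = alpha M (m + 1) i j / alpha_lead M m"
  using \<open>m \<le> r\<close>
proof (induction m)
  case 0
  then show ?case using alpha_1[OF \<open>1 \<le> i\<close> \<open>1 \<le> j\<close>, of M] by (simp add: alpha_lead_def)
next
  case (Suc m)
  have lead_m: "alpha_lead M m \<noteq> 0"
    using nz Suc.prems by (cases m) (auto simp: alpha_lead_def)
  have lead_Suc_m: "alpha_lead M (m + 1) \<noteq> 0" using nz Suc.prems by auto
  have "alpha M (m + 1) i j / alpha_lead M m
      - alpha M (m + 1) i (m + 1) * alpha M (m + 1) (m + 1) j / (alpha_lead M m * alpha_lead M (m + 1))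
      = (alpha_lead M (m + 1) * alpha M (m + 1) i j - alpha M (m + 1) i (m + 1) * alpha M (m + 1) (m + 1) j)
        / (alpha_lead M m * alpha_lead M (m + 1))"
    using lead_m lead_Suc_m by (simp add: field_simps)
  also have "\<dots> = alpha M (m + 2) i j / alpha_lead M (m + 1)"
    unfolding alpha_sylvester_identity[OF lead_m, symmetric] using lead_m by simp
  finally show ?case using Suc by (simp add: algebra_simps)
qed

lemma pick_insert_atLeastLessThan:
  assumes "r \<le> c" "p \<le> r"
  shows "pick (insert c {0..<r}) p = (if p < r then p else c)"
  using \<open>p \<le> r\<close>
proof (induction p)
  case 0
  show ?case using assms by (cases "r = 0") (auto intro: Least_equality)
next
  case (Suc p)
  then show ?case using assms by (auto intro: Least_equality)
qed

lemma alpha_eq_0_if_rank: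
  fixes M :: "'b::field mat"
  assumes M: "M \<in> carrier_mat n n" and rank: "vec_space.rank n M = r"
    and "1 \<le> i" "i \<le> n" "1 \<le> j" "j \<le> n"
  shows "alpha M (r + 1) i j = 0"
proof (cases "i < r + 1 \<or> j < r + 1")
  case True then show ?thesis by (simp add: alpha_eq_0)
next
  case False
  define I where "I = insert (i - 1) {0..<r}"
  define J where "J = insert (j - 1) {0..<r}"
  have "{a. a < n \<and> a \<in> I} = I" "{a. a < n \<and> a \<in> J} = J"
    using False assms unfolding I_def J_def by auto
  moreover have "card I = r + 1" "card J = r + 1"
    using False unfolding I_def J_def by auto
  ultimately have card_I: "card {a. a < dim_row M \<and> a \<in> I} = r + 1"
    and card_J: "card {a. a < dim_col M \<and> a \<in> J} = r + 1"
    using M by auto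
  have pick_I: "pick I p = (if p < r then p else i - 1)" and pick_J: "pick J p = (if p < r then p else j - 1)"
    if "p < r + 1" for p
    using that False pick_insert_atLeastLessThan[of r "i - 1" p] pick_insert_atLeastLessThan[of r "j - 1" p]
    unfolding I_def J_def by auto
  have "submatrix M I J = mat (r + 1) (r + 1)
      (\<lambda>(p, q). M $$ (if p < r + 1 - 1 then p else i - 1, if q < r + 1 - 1 then q else j - 1))"
    using card_I card_J by (intro eq_matI) (auto simp: dim_submatrix submatrix_index pick_I pick_J)
  then have "alpha M (r + 1) i j = det (submatrix M I J)" using False by (simp add: alpha_def)
  moreover have "det (submatrix M I J) = 0"
  proof (rule ccontr)
    assume "det (submatrix M I J) \<noteq> 0"
    from vec_space.rank_gt_minor[OF M this] show False using card_J M rank by simp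
  qed
  ultimately show ?thesis by simp
qed

lemma index_mult_mat_sum:
  "X \<in> carrier_mat m n \<Longrightarrow> Y \<in> carrier_mat n p \<Longrightarrow> i < m \<Longrightarrow> j < p \<Longrightarrow>
    (X * Y) $$ (i, j) = (\<Sum>l<n. X $$ (i, l) * Y $$ (l, j))"
  by (auto simp: scalar_prod_def intro!: sum.cong)

lemma mult_diagonal_mult_index:
  assumes X: "X \<in> carrier_mat m n" and D: "D \<in> carrier_mat n n" "diagonal_mat D"
    and Y: "Y \<in> carrier_mat n p" and i: "i < m" and j: "j < p"
  shows "(X * D * Y) $$ (i, j) = (\<Sum>l<n. X $$ (i, l) * D $$ (l, l) * Y $$ (l, j))"
proof -
  have XD: "(X * D) $$ (i, l) = X $$ (i, l) * D $$ (l, l)" if "l < n" for l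
  proof -
    have "(X * D) $$ (i, l) = (\<Sum>k<n. X $$ (i, k) * D $$ (k, l))"
      by (rule index_mult_mat_sum[OF X D(1) i that])
    also have "\<dots> = (\<Sum>k<n. if k = l then X $$ (i, l) * D $$ (l, l) else 0)"
      using D that unfolding diagonal_mat_def by (intro sum.cong) auto
    finally show ?thesis using that by simp
  qed
  have "(X * D * Y) $$ (i, j) = (\<Sum>l<n. (X * D) $$ (i, l) * Y $$ (l, j))"
    using X D Y i j by (intro index_mult_mat_sum) auto
  then show ?thesis by (simp add: XD)
qed

definition pivot_mat :: "nat \<Rightarrow> nat \<Rightarrow> 'b::field mat \<Rightarrow> 'b mat" where
  "pivot_mat n r M = mat n n (\<lambda>(i, j).
     if i = j \<and> i < r then inverse (alpha_lead M i * alpha_lead M (i + 1)) else 0)"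

lemma pivot_mat_carrier: "pivot_mat n r M \<in> carrier_mat n n"
  by (simp add: pivot_mat_def)

lemma diagonal_pivot_mat: "diagonal_mat (pivot_mat n r M)"
  by (simp add: diagonal_mat_def pivot_mat_def)

lemma L_mat_carrier: "L_mat n r M \<in> carrier_mat n n"
  by (simp add: L_mat_def)

lemma U_mat_carrier: "U_mat n r M \<in> carrier_mat n n"
  by (simp add: U_mat_def)

lemma LDU_decomposition:
  fixes M :: "'b::field mat"
  assumes M: "M \<in> carrier_mat n n" and rank: "vec_space.rank n M = r"
    and lead: "\<forall>k\<in>{1..r}. alpha_lead M k \<noteq> 0"
  shows "M = L_mat n r M * pivot_mat n r M * U_mat n r M"
proof (rule eq_matI)
  fix i j assume "i < dim_row (L_mat n r M * pivot_mat n r M * U_mat n r M)"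
    and "j < dim_col (L_mat n r M * pivot_mat n r M * U_mat n r M)"
  then have i: "i < n" and j: "j < n" by (simp_all add: L_mat_def U_mat_def)
  have "r \<le> n" using vec_space.rank_le_nc[OF M] rank by simp
  have "(L_mat n r M * pivot_mat n r M * U_mat n r M) $$ (i, j)
      = (\<Sum>l<n. L_mat n r M $$ (i, l) * pivot_mat n r M $$ (l, l) * U_mat n r M $$ (l, j))"
    by (rule mult_diagonal_mult_index[OF L_mat_carrier pivot_mat_carrier diagonal_pivot_mat U_mat_carrier i j])
  also have "\<dots> = (\<Sum>l<n. if l < r then alpha M (l + 1) (i + 1) (l + 1) * alpha M (l + 1) (l + 1) (j + 1)
      / (alpha_lead M l * alpha_lead M (l + 1)) else 0)"
    using i j by (intro sum.cong) (auto simp: L_mat_def U_mat_def pivot_mat_def divide_inverse)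
  also have "\<dots> = (\<Sum>l<r. alpha M (l + 1) (i + 1) (l + 1) * alpha M (l + 1) (l + 1) (j + 1)
      / (alpha_lead M l * alpha_lead M (l + 1)))"
    using \<open>r \<le> n\<close> by (intro sum.mono_neutral_cong_right) auto
  also have "\<dots> = M $$ (i, j)"
    using alpha_telescope[OF lead, of "i + 1" "j + 1" r] alpha_eq_0_if_rank[OF M rank, of "i + 1" "j + 1"] i j
    by simp
  finally show "M $$ (i, j) = (L_mat n r M * pivot_mat n r M * U_mat n r M) $$ (i, j)" ..
qed (use M in \<open>simp_all add: L_mat_def U_mat_def\<close>)

lemma lower_triangular_L_mat: "lower_triangular (L_mat n r M)"
  by (auto simp: lower_triangular_def L_mat_def alpha_eq_0)

lemma upper_triangular_U_mat: "upper_triangular (U_mat n r M)"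
  by (auto simp: upper_triangular_def U_mat_def alpha_eq_0)

lemma L_mat_diag_nonzero:
  assumes "\<forall>k\<in>{1..r}. alpha_lead M k \<noteq> 0" and "i < n"
  shows "L_mat n r M $$ (i, i) \<noteq> 0"
  using assms by (auto simp: L_mat_def alpha_lead_def)

lemma U_mat_diag_nonzero:
  assumes "\<forall>k\<in>{1..r}. alpha_lead M k \<noteq> 0" and "i < n"
  shows "U_mat n r M $$ (i, i) \<noteq> 0"
  using assms by (auto simp: U_mat_def alpha_lead_def)

lemma invertible_mat_if_triangular:
  fixes M :: "'b::field mat"
  assumes M: "M \<in> carrier_mat n n" and "upper_triangular M \<or> lower_triangular M"
    and diag: "\<And>i. i < n \<Longrightarrow> M $$ (i, i) \<noteq> 0"
  shows "invertible_mat M"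
proof -
  have "det M = prod_list (diag_mat M)"
  proof (cases "upper_triangular M")
    case True
    then show ?thesis by (rule det_upper_triangular[OF _ M])
  next
    case False
    then have "lower_triangular M" using assms(2) by simp
    then show ?thesis using M by (intro det_lower_triangular[OF _ M]) (auto simp: lower_triangular_def)
  qed
  also have "\<dots> = (\<Prod>i = 0..<n. M $$ (i, i))" using M by (simp add: prod_list_diag_prod)
  finally have "det M \<noteq> 0" using diag by simp
  then have "M \<in> Units (ring_mat TYPE('b) n ())" by (rule det_non_zero_imp_unit[OF M])
  then show ?thesis
    using M unfolding Units_def ring_mat_def invertible_mat_def inverts_mat_def by auto
qed

lemma flip_mat_carrier: "flip_mat n \<in> carrier_mat n n"
  by (simp add: flip_mat_def)

lemma flip_mat_mult_index:
  fixes X :: "'b::semiring_1 mat"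
  assumes "X \<in> carrier_mat n p" and "i < n" and "j < p"
  shows "(flip_mat n * X) $$ (i, j) = X $$ (n - 1 - i, j)"
proof -
  have "(flip_mat n * X) $$ (i, j) = (\<Sum>k<n. flip_mat n $$ (i, k) * X $$ (k, j))"
    using assms flip_mat_carrier by (intro index_mult_mat_sum) auto
  also have "\<dots> = (\<Sum>k<n. if k = n - 1 - i then X $$ (n - 1 - i, j) else 0)"
    using assms by (intro sum.cong) (auto simp: flip_mat_def)
  finally show ?thesis using assms by simp
qed

lemma mult_flip_mat_index:
  fixes X :: "'b::semiring_1 mat"
  assumes "X \<in> carrier_mat m n" and "i < m" and "j < n"
  shows "(X * flip_mat n) $$ (i, j) = X $$ (i, n - 1 - j)"
proof -
  have "(X * flip_mat n) $$ (i, j) = (\<Sum>k<n. X $$ (i, k) * flip_mat n $$ (k, j))"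
    using assms flip_mat_carrier by (intro index_mult_mat_sum) auto
  also have "\<dots> = (\<Sum>k<n. if k = n - 1 - j then X $$ (i, n - 1 - j) else 0)"
    using assms by (intro sum.cong) (auto simp: flip_mat_def)
  finally show ?thesis using assms by simp
qed

lemma flip_mat_involution: "flip_mat n * flip_mat n = (1\<^sub>m n :: 'b::semiring_1 mat)"
proof (rule eq_matI)
  fix i j assume "i < dim_row (1\<^sub>m n :: 'b mat)" and "j < dim_col (1\<^sub>m n :: 'b mat)"
  then have "i < n" "j < n" by auto
  then have "(flip_mat n * flip_mat n) $$ (i, j) = (flip_mat n :: 'b mat) $$ (n - 1 - i, j)"
    by (rule flip_mat_mult_index[OF flip_mat_carrier])
  then show "(flip_mat n * flip_mat n) $$ (i, j) = (1\<^sub>m n :: 'b mat) $$ (i, j)"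
    using \<open>i < n\<close> \<open>j < n\<close> by (auto simp: flip_mat_def)
qed (simp_all add: flip_mat_def)

lemma flip_conj_index:
  fixes X :: "'b::semiring_1 mat"
  assumes X: "X \<in> carrier_mat n n" and "i < n" and "j < n"
  shows "(flip_mat n * X * flip_mat n) $$ (i, j) = X $$ (n - 1 - i, n - 1 - j)"
proof -
  have "(flip_mat n * X * flip_mat n) $$ (i, j) = (flip_mat n * X) $$ (i, n - 1 - j)"
    using assms mult_carrier_mat[OF flip_mat_carrier X] by (intro mult_flip_mat_index)
  also have "\<dots> = X $$ (n - 1 - i, n - 1 - j)"
    using assms by (intro flip_mat_mult_index) auto
  finally show ?thesis .
qed

lemma upper_triangular_flip_conj:
  fixes X :: "'b::semiring_1 mat"
  assumes X: "X \<in> carrier_mat n n" and lower: "lower_triangular X"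
  shows "upper_triangular (flip_mat n * X * flip_mat n)"
  unfolding upper_triangular_def
proof (intro allI impI)
  fix i j assume "i < dim_row (flip_mat n * X * flip_mat n)" and "j < i"
  then have "i < n" and "n - 1 - i < n - 1 - j" by (auto simp: flip_mat_def)
  then show "(flip_mat n * X * flip_mat n) $$ (i, j) = 0"
    using X lower \<open>j < i\<close> by (simp add: flip_conj_index lower_triangular_def)
qed

lemma invertible_flip_conj:
  fixes X :: "'b::field mat"
  assumes X: "X \<in> carrier_mat n n" and "lower_triangular X"
    and diag: "\<And>i. i < n \<Longrightarrow> X $$ (i, i) \<noteq> 0"
  shows "invertible_mat (flip_mat n * X * flip_mat n)"
proof (rule invertible_mat_if_triangular)
  show "flip_mat n * X * flip_mat n \<in> carrier_mat n n"
    using X by (meson mult_carrier_mat flip_mat_carrier)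
  show "upper_triangular (flip_mat n * X * flip_mat n) \<or> lower_triangular (flip_mat n * X * flip_mat n)"
    using upper_triangular_flip_conj[OF assms(1,2)] ..
  show "(flip_mat n * X * flip_mat n) $$ (i, i) \<noteq> 0" if "i < n" for i
    using that X diag[of "n - 1 - i"] by (simp add: flip_conj_index)
qed

lemma flip_mat_mult_LDU:
  fixes L D U :: "'b::semiring_1 mat"
  assumes L: "L \<in> carrier_mat n n" and D: "D \<in> carrier_mat n n" and U: "U \<in> carrier_mat n n"
  shows "flip_mat n * (L * D * U) = (flip_mat n * L * flip_mat n) * (flip_mat n * D) * U"
proof -
  let ?S = "flip_mat n :: 'b mat"
  have S: "?S \<in> carrier_mat n n" by (rule flip_mat_carrier)
  have "?S * (?S * D) = D" using assoc_mult_mat[OF S S D] D by (simp add: flip_mat_involution)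
  then have "(?S * L * ?S) * (?S * D) = ?S * L * D"
    using assoc_mult_mat[OF mult_carrier_mat[OF S L] S mult_carrier_mat[OF S D]] by simp
  moreover have "?S * (L * D * U) = ?S * L * D * U"
    using assoc_mult_mat[OF S mult_carrier_mat[OF L D] U] assoc_mult_mat[OF S L D] by simp
  ultimately show ?thesis by simp
qed

lemma perm_type_flip_mat_mult:
  fixes D :: "'b::semiring_1 mat"
  assumes D: "D \<in> carrier_mat n n" and diag: "diagonal_mat D"
  shows "perm_type (flip_mat n * D)"
proof -
  have support: "j = n - 1 - i" if "i < n" "j < n" "(flip_mat n * D) $$ (i, j) \<noteq> 0" for i j
  proof -
    have "D $$ (n - 1 - i, j) \<noteq> 0" using that flip_mat_mult_index[OF D \<open>i < n\<close> \<open>j < n\<close>] by simp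
    moreover have "n - 1 - i < n" using \<open>i < n\<close> by simp
    moreover have "\<forall>a<n. \<forall>b<n. a \<noteq> b \<longrightarrow> D $$ (a, b) = 0"
      using diag D unfolding diagonal_mat_def by auto
    ultimately show ?thesis using \<open>j < n\<close> by metis
  qed
  have dims: "dim_row (flip_mat n * D) = n" "dim_col (flip_mat n * D) = n"
    using D by (simp_all add: flip_mat_def)
  show ?thesis unfolding perm_type_def dims
  proof (intro conjI allI impI)
    fix i j1 j2 assume "i < n" "j1 < n" "j2 < n"
      "(flip_mat n * D) $$ (i, j1) \<noteq> 0" "(flip_mat n * D) $$ (i, j2) \<noteq> 0"
    then show "j1 = j2" using support by metis
  next
    fix j i1 i2 assume "j < n" "i1 < n" "i2 < n"
      "(flip_mat n * D) $$ (i1, j) \<noteq> 0" "(flip_mat n * D) $$ (i2, j) \<noteq> 0"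
    then show "i1 = i2" using support[of i1 j] support[of i2 j] by linarith
  qed
qed

lemma (in comm_ring_hom) hom_alpha:
  assumes "A \<in> carrier_mat n n" and "i \<le> n" and "j \<le> n"
  shows "hom (alpha A k i j) = alpha (map_mat hom A) k i j"
proof (cases "k = 0 \<or> i < k \<or> j < k")
  case False
  have "map_mat hom (mat k k (\<lambda>(p, q). A $$ (if p < k - 1 then p else i - 1, if q < k - 1 then q else j - 1)))
      = mat k k (\<lambda>(p, q). map_mat hom A $$ (if p < k - 1 then p else i - 1, if q < k - 1 then q else j - 1))"
    using False assms by (intro eq_matI) auto
  then show ?thesis using False by (simp add: alpha_def hom_det[symmetric])
qed (auto simp: alpha_def)

lemma (in comm_ring_hom) hom_alpha_lead:
  "A \<in> carrier_mat n n \<Longrightarrow> k \<le> n \<Longrightarrow> hom (alpha_lead A k) = alpha_lead (map_mat hom A) k"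
  using hom_alpha[of A n k k] by (simp add: alpha_lead_def)

lemma (in comm_ring_hom) map_mat_L_mat:
  "A \<in> carrier_mat n n \<Longrightarrow> map_mat hom (L_mat n r A) = L_mat n r (map_mat hom A)"
  by (rule eq_matI) (auto simp: L_mat_def hom_alpha)

lemma (in comm_ring_hom) map_mat_U_mat:
  "A \<in> carrier_mat n n \<Longrightarrow> map_mat hom (U_mat n r A) = U_mat n r (map_mat hom A)"
  by (rule eq_matI) (auto simp: U_mat_def hom_alpha)

interpretation to_fract: inj_idom_hom "to_fract :: 'a::idom \<Rightarrow> 'a fract"
  by unfold_locales (auto simp: to_fract_def Zero_fract_def One_fract_def eq_fract)

lemma D_mat_eq_pivot_mat:
  "A \<in> carrier_mat n n \<Longrightarrow> D_mat n r A = pivot_mat n r (map_mat to_fract A)"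
  by (rule eq_matI) (auto simp: D_mat_def pivot_mat_def to_fract.hom_alpha_lead[symmetric] to_fract.hom_mult)

theorem corollary2:
  fixes A :: "'a::idom mat" and n r :: nat
  assumes "A \<in> carrier_mat n n"
    and "vec_space.rank n (map_mat to_fract A) = r"
    and "r \<ge> 1"
    and "\<forall>i\<in>{1..r}. alpha_lead A i \<noteq> 0"
  defines "L \<equiv> map_mat to_fract (L_mat n r A)"
    and "U \<equiv> map_mat to_fract (U_mat n r A)"
    and "D \<equiv> D_mat n r A"
    and "S \<equiv> (flip_mat n :: 'a fract mat)"
  shows "map_mat to_fract A = L * D * U
    \<and> invertible_mat L \<and> lower_triangular L
    \<and> invertible_mat U \<and> upper_triangular U
    \<and> invertible_mat (S * L * S) \<and> upper_triangular (S * L * S)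
    \<and> S * map_mat to_fract A = (S * L * S) * (S * D) * U
    \<and> perm_type (S * D)"
proof -
  define F where "F = map_mat to_fract A"
  have F: "F \<in> carrier_mat n n" using assms(1) unfolding F_def by simp
  have rank: "vec_space.rank n F = r" unfolding F_def by (rule assms(2))
  have "r \<le> n" using vec_space.rank_le_nc[OF F] rank by simp
  then have lead: "\<forall>k\<in>{1..r}. alpha_lead F k \<noteq> 0"
    using assms(1,4) unfolding F_def by (auto simp: to_fract.hom_alpha_lead[symmetric])
  have factors: "L = L_mat n r F" "U = U_mat n r F" "D = pivot_mat n r F"
    unfolding L_def U_def D_def F_def using assms(1)
    by (simp_all add: to_fract.map_mat_L_mat to_fract.map_mat_U_mat D_mat_eq_pivot_mat)
  have LDU: "F = L * D * U" unfolding factors by (rule LDU_decomposition[OF F rank lead])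
  have carriers: "L \<in> carrier_mat n n" "D \<in> carrier_mat n n" "U \<in> carrier_mat n n"
    unfolding factors by (simp_all add: L_mat_carrier U_mat_carrier pivot_mat_carrier)
  have lower: "lower_triangular L" and upper: "upper_triangular U" and diagonal: "diagonal_mat D"
    unfolding factors by (simp_all add: lower_triangular_L_mat upper_triangular_U_mat diagonal_pivot_mat)
  have L_diag: "L $$ (i, i) \<noteq> 0" and U_diag: "U $$ (i, i) \<noteq> 0" if "i < n" for i
    unfolding factors using L_mat_diag_nonzero[OF lead that] U_mat_diag_nonzero[OF lead that] by auto
  have "invertible_mat L" "invertible_mat U"
    using carriers lower upper L_diag U_diag by (auto intro: invertible_mat_if_triangular)
  then show ?thesis
    unfolding F_def[symmetric] S_def
    using LDU lower upper upper_triangular_flip_conj[OF carriers(1) lower]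
      invertible_flip_conj[OF carriers(1) lower L_diag] flip_mat_mult_LDU[OF carriers]
      perm_type_flip_mat_mult[OF carriers(2) diagonal]
    by simp
qed

end
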